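(* In the setting of the discrete snake in $\mathbb{Z}^4$ described in the context, let $k\ge1$ be such that $\mathbb{P}(\widehat W_k=0)>0$, and let $\widetilde W_k=(\widetilde W_k(j))_{j\le0}$ with $\widetilde W_k(j)=W_k(\zeta_k+j)$. Under $\mathbb{P}(\cdot\mid\widehat W_k=0)$, the pairs $(W_0,\widetilde W_k)$ and $(\widetilde W_k,W_0)$ have the same distribution.
   Context: $\theta$ is a symmetric probability measure on $\mathbb{Z}^4$ with small exponential moments, not supported on a strict subgroup, with covariance matrix $\sigma^2\mathrm{Id}$. $S$ is the random walk with jump law $\theta$ started at $0$. The discrete snake $(W_n)$ is the Markov chain on paths $w:\{k\le\zeta(w)\}\to\mathbb{Z}^4$ with kernel $Q(w,\cdot)=\frac12\delta_{\overline w}+\frac12\sum_x\theta(x)\delta_{w\oplus(\widehat w+x)}$ ($\widehat w=w(\zeta(w))$, $\overline w$ erases the endpoint, $w\oplus x$ appends $x$); $\zeta_n=\zeta(W_n)$. Under $\mathbb{P}$, $\zeta_0=0$ and $W_0=(-S_{-k})_{k\le0}$. *)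

theory Defs
  imports "HOL-Probability.Probability"
begin

type_synonym site = "int ^ 4"

text \<open>A snake path w : {k \<le> \<zeta>(w)} \<rightarrow> Z^4 is encoded as the pair (\<zeta>(w), f) with
  f k = w(k) for k \<le> \<zeta>(w) (values of f above \<zeta>(w) are irrelevant; the operations
  below keep them equal to 0).\<close>
type_synonym spath = "int \<times> (int \<Rightarrow> site)"

definition lifetime :: "spath \<Rightarrow> int" where "lifetime w = fst w"
definition tip :: "spath \<Rightarrow> site" where "tip w = snd w (fst w)"

definition erase :: "spath \<Rightarrow> spath" where
  "erase w = (fst w - 1, (snd w)(fst w := 0))"

definition append_pt :: "spath \<Rightarrow> site \<Rightarrow> spath" where
  "append_pt w x = (fst w + 1, (snd w)(fst w + 1 := x))"

definition snake_step :: "spath \<Rightarrow> site option \<Rightarrow> spath" where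
  "snake_step w m = (case m of None \<Rightarrow> erase w | Some x \<Rightarrow> append_pt w (tip w + x))"

definition move_pmf :: "site pmf \<Rightarrow> site option pmf" where
  "move_pmf \<theta> = bind_pmf (bernoulli_pmf (1/2))
      (\<lambda>b. if b then return_pmf None else map_pmf Some \<theta>)"

text \<open>Canonical probability space: an i.i.d. stream of pairs (X_{n+1}, M_{n+1}) where
  the X's are the increments of the random walk S and the M's the moves of the snake.\<close>
definition snake_space :: "site pmf \<Rightarrow> (site \<times> site option) stream measure" where
  "snake_space \<theta> = stream_space (measure_pmf (pair_pmf \<theta> (move_pmf \<theta>)))"

definition rw :: "(site \<times> site option) stream \<Rightarrow> nat \<Rightarrow> site" where
  "rw \<omega> n = (\<Sum>i<n. fst (\<omega> !! i))"

definition W0 :: "(site \<times> site option) stream \<Rightarrow> int \<Rightarrow> site" where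
  "W0 \<omega> j = (if j \<le> 0 then - rw \<omega> (nat (- j)) else 0)"

fun snake :: "(site \<times> site option) stream \<Rightarrow> nat \<Rightarrow> spath" where
  "snake \<omega> 0 = (0, W0 \<omega>)"
| "snake \<omega> (Suc n) = snake_step (snake \<omega> n) (snd (\<omega> !! n))"

definition Wtilde :: "(site \<times> site option) stream \<Rightarrow> nat \<Rightarrow> int \<Rightarrow> site" where
  "Wtilde \<omega> k j = (if j \<le> 0 then snd (snake \<omega> k) (lifetime (snake \<omega> k) + j) else 0)"

definition path_space :: "(int \<Rightarrow> site) measure" where
  "path_space = PiM UNIV (\<lambda>_. count_space UNIV)"

definition pair_path_space :: "((int \<Rightarrow> site) \<times> (int \<Rightarrow> site)) measure" where
  "pair_path_space = path_space \<Otimes>\<^sub>M path_space"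

definition symmetric_law :: "site pmf \<Rightarrow> bool" where
  "symmetric_law \<theta> \<longleftrightarrow> (\<forall>x. pmf \<theta> (- x) = pmf \<theta> x)"

definition small_exp_moments :: "site pmf \<Rightarrow> bool" where
  "small_exp_moments \<theta> \<longleftrightarrow> (\<exists>c>0. integrable (measure_pmf \<theta>)
      (\<lambda>x. exp (c * (\<Sum>i\<in>UNIV. real_of_int \<bar>x $ i\<bar>))))"

definition is_subgroup :: "site set \<Rightarrow> bool" where
  "is_subgroup H \<longleftrightarrow> 0 \<in> H \<and> (\<forall>x\<in>H. \<forall>y\<in>H. x - y \<in> H)"

definition not_on_strict_subgroup :: "site pmf \<Rightarrow> bool" where
  "not_on_strict_subgroup \<theta> \<longleftrightarrow>
     (\<forall>H. is_subgroup H \<and> set_pmf \<theta> \<subseteq> H \<longrightarrow> H = UNIV)"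

definition covariance_scalar :: "site pmf \<Rightarrow> real \<Rightarrow> bool" where
  "covariance_scalar \<theta> \<sigma> \<longleftrightarrow> (\<forall>i j.
      integrable (measure_pmf \<theta>) (\<lambda>x. real_of_int (x $ i) * real_of_int (x $ j)) \<and>
      measure_pmf.expectation \<theta> (\<lambda>x. real_of_int (x $ i) * real_of_int (x $ j))
        = (if i = j then \<sigma>\<^sup>2 else 0))"

end

theory Submission
  imports Defs
begin

text \<open>Encode an outcome by the increments \<open>X\<close> of the initial path, read downwards from its tip,
  together with the sequence \<open>M\<close> of moves. At each time the path is then given by its tip and a
  stack of increments, on which an append pushes and an erasure pops. Reading the first \<open>k\<close> moves
  backwards, each replaced by the move that undoes it, and starting from the stack at time \<open>k\<close>,
  gives a new code \<open>R\<^sub>k(X, M)\<close> whose snake retraces the first \<open>k\<close> steps in reverse: its initial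
  path is \<open>W\<^sub>k\<close> re-rooted at its tip, its stack at time \<open>k\<close> is \<open>X\<close>, and its tip at time \<open>k\<close> is
  minus that of \<open>W\<^sub>k\<close>. So on the event that \<open>W\<^sub>k\<close> ends at \<open>0\<close>, which \<open>R\<^sub>k\<close> leaves invariant,
  \<open>R\<^sub>k\<close> exchanges \<open>W\<^sub>0\<close> and the re-rooted \<open>W\<^sub>k\<close>. It remains that \<open>R\<^sub>k\<close> preserves the law of the
  code. It factors into \<open>k\<close> maps, each replacing one move by the move undoing it from the current
  stack and then permuting the moves; such a replacement preserves the law because an erasure
  exposes an increment with law \<open>\<theta>\<close> independent of the rest of the stack, which is exactly what
  an append pushes.\<close>

section \<open>I.i.d. sequences of pairs and conditioned measures\<close>

lemma prod_indicator_Pi: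
  "finite J \<Longrightarrow> (\<Prod>j\<in>J. indicator (A j) (f j) :: ennreal) = indicator (Pi J A) f"
  by (induction J rule: finite_induct) (auto simp: indicator_def)

lemma nn_integral_PiM_prod:
  fixes p :: "'a pmf" and J :: "'i set"
  assumes "finite J"
  shows "(\<integral>\<^sup>+x. (\<Prod>j\<in>J. f j (x j)) \<partial>PiM UNIV (\<lambda>_. measure_pmf p)) = (\<Prod>j\<in>J. \<integral>\<^sup>+y. f j y \<partial>measure_pmf p)"
proof -
  interpret product_prob_space "\<lambda>_::'i. measure_pmf p" UNIV
    by unfold_locales
  have "(\<integral>\<^sup>+x. (\<Prod>j\<in>J. f j (x j)) \<partial>PiM UNIV (\<lambda>_. measure_pmf p))
      = (\<integral>\<^sup>+x. (\<Prod>j\<in>J. f j (x j)) \<partial>distr (PiM UNIV (\<lambda>_. measure_pmf p)) (PiM J (\<lambda>_. measure_pmf p)) (\<lambda>x. restrict x J))"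
    by (subst nn_integral_distr)
       (auto intro!: nn_integral_cong prod.cong borel_measurable_prod_ennreal
          measurable_compose[OF measurable_component_singleton])
  also have "\<dots> = (\<Prod>j\<in>J. \<integral>\<^sup>+y. f j y \<partial>measure_pmf p)"
    using assms by (simp add: distr_PiM_restrict_finite product_nn_integral_prod)
  finally show ?thesis .
qed

lemma measurable_Pair_count_space:
  assumes "f \<in> M \<rightarrow>\<^sub>M count_space UNIV" and "g \<in> M \<rightarrow>\<^sub>M count_space UNIV"
  shows "(\<lambda>x. (f x, g x)) \<in> M \<rightarrow>\<^sub>M count_space (UNIV :: ('a::countable \<times> 'b::countable) set)"
  using measurable_Pair[OF assms] by (simp add: pair_measure_countable)

lemma distr_PiM_pair_pmf:
  fixes p :: "'a::countable pmf" and q :: "'b::countable pmf"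
  shows "distr (PiM UNIV (\<lambda>_. measure_pmf p) \<Otimes>\<^sub>M PiM UNIV (\<lambda>_. measure_pmf q))
      (PiM (UNIV :: 'i set) (\<lambda>_. measure_pmf (pair_pmf p q))) (\<lambda>w i. (fst w i, snd w i))
    = PiM UNIV (\<lambda>_. measure_pmf (pair_pmf p q))"
    (is "distr ?S ?P ?f = ?P")
proof (rule measure_eqI_PiM_infinite[symmetric, OF refl])
  interpret P: prob_space ?P by (rule prob_space_PiM) (rule prob_space_measure_pmf)
  interpret Q: prob_space "PiM (UNIV :: 'i set) (\<lambda>_. measure_pmf q)"
    by (rule prob_space_PiM) (rule prob_space_measure_pmf)
  have coord [measurable]: "(\<lambda>w. (fst w j, snd w j)) \<in> ?S \<rightarrow>\<^sub>M count_space UNIV" for j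
    by (intro measurable_Pair_count_space) measurable
  have [measurable]: "?f \<in> ?S \<rightarrow>\<^sub>M ?P"
    by (rule measurable_PiM_single') auto
  show "finite_measure ?P" by unfold_locales
  show "sets (distr ?S ?P ?f) = sets ?P"
    by simp
  fix A and J :: "'i set" assume J: "finite J" "J \<subseteq> UNIV" and A: "\<And>i. i \<in> J \<Longrightarrow> A i \<in> sets (measure_pmf (pair_pmf p q))"
  let ?X = "prod_emb (UNIV :: 'i set) (\<lambda>_. measure_pmf (pair_pmf p q)) J (Pi\<^sub>E J A)"
  have X [measurable]: "?X \<in> sets ?P"
    using J A by (intro sets_PiM_I) auto
  have ind: "indicator ?X f = (\<Prod>j\<in>J. indicator (A j) (f j) :: ennreal)" for f
    using J by (simp add: prod_indicator_Pi prod_emb_def indicator_def PiE_iff Pi_iff space_PiM)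
  have "emeasure ?P ?X = (\<Prod>j\<in>J. emeasure (measure_pmf (pair_pmf p q)) (A j))"
    using J A by (subst emeasure_PiM_emb) (auto intro: prob_space_measure_pmf)
  also have "\<dots> = (\<Prod>j\<in>J. \<integral>\<^sup>+x. \<integral>\<^sup>+y. indicator (A j) (x, y) \<partial>measure_pmf q \<partial>measure_pmf p)"
    by (simp add: nn_integral_pair_pmf'[symmetric])
  also have "\<dots> = (\<integral>\<^sup>+x. (\<Prod>j\<in>J. \<integral>\<^sup>+y. indicator (A j) (x j, y) \<partial>measure_pmf q)
      \<partial>PiM UNIV (\<lambda>_. measure_pmf p))"
    using nn_integral_PiM_prod[OF J(1), where p=p and f="\<lambda>j x. \<integral>\<^sup>+y. indicator (A j) (x, y) \<partial>measure_pmf q"]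
    by simp
  also have "\<dots> = (\<integral>\<^sup>+x. \<integral>\<^sup>+y. (\<Prod>j\<in>J. indicator (A j) (x j, y j))
      \<partial>PiM UNIV (\<lambda>_. measure_pmf q) \<partial>PiM UNIV (\<lambda>_. measure_pmf p))"
    using nn_integral_PiM_prod[OF J(1), where p=q and f="\<lambda>j y. indicator (A j) (_ j, y)"]
    by (intro nn_integral_cong) simp
  also have "\<dots> = (\<integral>\<^sup>+w. indicator ?X (?f w) \<partial>?S)"
    by (subst Q.nn_integral_fst[symmetric])
       (auto simp: ind intro!: borel_measurable_prod_ennreal)
  also have "\<dots> = (\<integral>\<^sup>+z. indicator ?X z \<partial>distr ?S ?P ?f)"
    by (rule nn_integral_distr[symmetric]) auto
  also have "\<dots> = emeasure (distr ?S ?P ?f) ?X"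
    by (subst nn_integral_indicator) auto
  finally show "emeasure ?P ?X = emeasure (distr ?S ?P ?f) ?X" .
qed

lemma uniform_measure_distr:
  assumes [measurable]: "f \<in> M \<rightarrow>\<^sub>M N" "A \<in> sets N"
  shows "uniform_measure (distr M N f) A = distr (uniform_measure M (f -` A \<inter> space M)) N f"
proof -
  have "density (distr M N f) (\<lambda>x. indicator A x / emeasure (distr M N f) A)
      = distr (density M (\<lambda>x. indicator A (f x) / emeasure (distr M N f) A)) N f"
    by (rule density_distr) auto
  also have "density M (\<lambda>x. indicator A (f x) / emeasure (distr M N f) A)
      = density M (\<lambda>x. indicator (f -` A \<inter> space M) x / emeasure M (f -` A \<inter> space M))"
    by (rule density_cong) (auto simp: emeasure_distr indicator_def)
  finally show ?thesis by (simp add: uniform_measure_def)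
qed

lemma distr_uniform_measure_invariant:
  assumes [measurable]: "T \<in> M \<rightarrow>\<^sub>M M" "A \<in> sets M"
    and "distr M M T = M" and "T -` A \<inter> space M = A"
  shows "distr (uniform_measure M A) M T = uniform_measure M A"
  using uniform_measure_distr[of T M M A] assms(3,4) by simp

lemma distr_uniform_measure_transform:
  assumes [measurable]: "T \<in> M \<rightarrow>\<^sub>M M" "A \<in> sets M" "f \<in> M \<rightarrow>\<^sub>M N" "g \<in> M \<rightarrow>\<^sub>M N"
    and "distr M M T = M" and "T -` A \<inter> space M = A"
    and "\<And>x. x \<in> A \<Longrightarrow> f x = g (T x)"
  shows "distr (uniform_measure M A) N f = distr (uniform_measure M A) N g"
proof -
  have "distr (uniform_measure M A) N f = distr (uniform_measure M A) N (g \<circ> T)"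
    using assms(7) by (intro distr_cong_AE AE_uniform_measureI) auto
  also have "\<dots> = distr (distr (uniform_measure M A) M T) N g"
    by (rule distr_distr[symmetric]) auto
  finally show ?thesis
    using distr_uniform_measure_invariant[of T M A] assms(5,6) by simp
qed

section \<open>Codes, stacks and the reversal of moves\<close>

text \<open>In a code \<open>(X, M)\<close>, \<open>X !! i = W\<^sub>0(-i) - W\<^sub>0(-i-1)\<close> and \<open>M n\<close> is the move of step \<open>n + 1\<close> as in
  \<open>snake_step\<close>. The same encoding describes the path at any later time, by its tip and its stack.\<close>

type_synonym 'a code = "'a stream \<times> (nat \<Rightarrow> 'a option)"

definition stack_move :: "'a stream \<Rightarrow> 'a option \<Rightarrow> 'a stream" where
  "stack_move Y m = (case m of None \<Rightarrow> stl Y | Some y \<Rightarrow> y ## Y)"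

definition tip_shift :: "'a::uminus stream \<Rightarrow> 'a option \<Rightarrow> 'a" where
  "tip_shift Y m = (case m of None \<Rightarrow> - shd Y | Some y \<Rightarrow> y)"

definition undo_move :: "'a option \<Rightarrow> 'a stream \<Rightarrow> 'a option" where
  "undo_move m Y = (case m of None \<Rightarrow> Some (shd Y) | Some _ \<Rightarrow> None)"

lemma stack_move_undo_move [simp]: "stack_move (stack_move Y m) (undo_move m Y) = Y"
  by (cases m) (simp_all add: stack_move_def undo_move_def)

lemma tip_shift_undo_move [simp]:
  "tip_shift (stack_move Y m) (undo_move m Y) = - tip_shift Y (m :: 'a::group_add option)"
  by (cases m) (simp_all add: stack_move_def undo_move_def tip_shift_def)

primrec stack :: "'a code \<Rightarrow> nat \<Rightarrow> 'a stream" where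
  "stack w 0 = fst w"
| "stack w (Suc n) = stack_move (stack w n) (snd w n)"

primrec tip_pos :: "'a::ab_group_add code \<Rightarrow> nat \<Rightarrow> 'a" where
  "tip_pos w 0 = 0"
| "tip_pos w (Suc n) = tip_pos w n + tip_shift (stack w n) (snd w n)"

definition reversal :: "nat \<Rightarrow> 'a code \<Rightarrow> 'a code" where
  "reversal k w = (stack w k,
     \<lambda>s. if s < k then undo_move (snd w (k - 1 - s)) (stack w (k - 1 - s)) else snd w s)"

lemma fst_reversal [simp]: "fst (reversal k w) = stack w k"
  by (simp add: reversal_def)

lemma snd_reversal:
  "s < k \<Longrightarrow> snd (reversal k w) s = undo_move (snd w (k - 1 - s)) (stack w (k - 1 - s))"
  by (simp add: reversal_def)

lemma stack_reversal: "s \<le> k \<Longrightarrow> stack (reversal k w) s = stack w (k - s)"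
proof (induction s)
  case (Suc s)
  then have "k - s = Suc (k - Suc s)" by simp
  with Suc show ?case by (simp add: snd_reversal)
qed simp

lemma tip_pos_reversal:
  "s \<le> k \<Longrightarrow> tip_pos (reversal k w) s = tip_pos w (k - s) - tip_pos w k"
proof (induction s)
  case (Suc s)
  then have "k - s = Suc (k - Suc s)" by simp
  with Suc show ?case by (simp add: snd_reversal stack_reversal)
qed simp

corollary tip_pos_reversal_self: "tip_pos (reversal k w) k = - tip_pos w k"
  by (simp add: tip_pos_reversal)

definition undo_at :: "nat \<Rightarrow> 'a code \<Rightarrow> 'a code" where
  "undo_at k w = (stack_move (fst w) (snd w k), (snd w)(k := undo_move (snd w k) (fst w)))"

definition reindex_moves :: "(nat \<Rightarrow> nat) \<Rightarrow> 'a code \<Rightarrow> 'a code" where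
  "reindex_moves f w = (fst w, snd w \<circ> f)"

definition cycle_front :: "nat \<Rightarrow> nat \<Rightarrow> nat" where
  "cycle_front k s = (if s = 0 then k else if s \<le> k then s - 1 else s)"

lemma inj_cycle_front: "inj (cycle_front k)"
  by (auto simp: inj_def cycle_front_def split: if_splits)

lemma reversal_Suc: "reversal (Suc k) = reindex_moves (cycle_front k) \<circ> undo_at k \<circ> reversal k"
  by (auto simp: reversal_def reindex_moves_def undo_at_def cycle_front_def fun_eq_iff
      Suc_diff_le not_less le_Suc_eq)

text \<open>The path relative to its tip: \<open>w(\<zeta>(w) + j) - w(\<zeta>(w))\<close> for \<open>j \<le> 0\<close>, from the stack of \<open>w\<close>.\<close>
definition stack_path :: "'a::ab_group_add stream \<Rightarrow> int \<Rightarrow> 'a" where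
  "stack_path Y j = (if j \<le> 0 then - (\<Sum>i<nat (- j). Y !! i) else 0)"

lemma stack_path_0 [simp]: "stack_path Y 0 = 0"
  by (simp add: stack_path_def)

lemma stack_path_Stream: "j \<le> 0 \<Longrightarrow> stack_path (y ## Y) (j - 1) = - y + stack_path Y j"
proof -
  assume "j \<le> 0"
  then obtain n where j: "j = - int n" by (metis minus_minus nonneg_int_cases neg_0_le_iff_le)
  have "(\<Sum>i<Suc n. (y ## Y) !! i) = y + (\<Sum>i<n. Y !! i)"
    by (subst sum.lessThan_Suc_shift) simp
  moreover have "nat (- (j - 1)) = Suc n" using j by simp
  ultimately show ?thesis using j by (simp add: stack_path_def)
qed

definition code_of :: "('a \<times> 'b) stream \<Rightarrow> 'a stream \<times> (nat \<Rightarrow> 'b)" where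
  "code_of \<omega> = (smap fst \<omega>, \<lambda>n. snd (\<omega> !! n))"

lemma snake_code:
  "j \<le> 0 \<Longrightarrow> snd (snake \<omega> n) (lifetime (snake \<omega> n) + j)
     = tip_pos (code_of \<omega>) n + stack_path (stack (code_of \<omega>) n) j"
proof (induction n arbitrary: j)
  case 0
  then show ?case
    by (simp add: W0_def rw_def stack_path_def code_of_def lifetime_def)
next
  case (Suc n)
  obtain z f where sn: "snake \<omega> n = (z, f)" by force
  let ?Y = "stack (code_of \<omega>) n" and ?t = "tip_pos (code_of \<omega>) n"
  have IH: "f (z + i) = ?t + stack_path ?Y i" if "i \<le> 0" for i
    using Suc.IH[OF that] by (simp add: sn lifetime_def)
  show ?case
  proof (cases "snd (\<omega> !! n)")
    case None
    have "stack_path ?Y (j - 1) = - shd ?Y + stack_path (stl ?Y) j"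
      using stack_path_Stream[of j "shd ?Y" "stl ?Y"] Suc.prems by simp
    then have "f (z + (j - 1)) = ?t - shd ?Y + stack_path (stl ?Y) j"
      using IH[of "j - 1"] Suc.prems by simp
    then show ?thesis using None Suc.prems
      by (simp add: sn snake_step_def erase_def lifetime_def stack_move_def tip_shift_def
          code_of_def stack_path_Stream algebra_simps)
  next
    case (Some y)
    show ?thesis
    proof (cases "j = 0")
      case True
      then show ?thesis using Some IH[of 0]
        by (simp add: sn snake_step_def append_pt_def lifetime_def tip_def tip_shift_def code_of_def)
    next
      case False
      have "f (z + (j + 1)) = ?t + stack_path ?Y (j + 1)"
        using IH[of "j + 1"] Suc.prems False by simp
      moreover have "stack_path (y ## ?Y) j = - y + stack_path ?Y (j + 1)"
        using stack_path_Stream[of "j + 1" y ?Y] Suc.prems False by simp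
      ultimately show ?thesis using Some Suc.prems False
        by (simp add: sn snake_step_def append_pt_def lifetime_def stack_move_def tip_shift_def
            code_of_def algebra_simps)
    qed
  qed
qed

lemma tip_snake: "tip (snake \<omega> n) = tip_pos (code_of \<omega>) n"
  using snake_code[of 0 \<omega> n] by (simp add: tip_def lifetime_def)

definition Wtilde_code :: "nat \<Rightarrow> 'a::ab_group_add code \<Rightarrow> int \<Rightarrow> 'a" where
  "Wtilde_code k w j = (if j \<le> 0 then tip_pos w k + stack_path (stack w k) j else 0)"

lemma W0_code: "W0 \<omega> = stack_path (fst (code_of \<omega>))"
  by (simp add: fun_eq_iff W0_def stack_path_def rw_def code_of_def)

lemma Wtilde_code: "Wtilde \<omega> k = Wtilde_code k (code_of \<omega>)"
  by (simp add: fun_eq_iff Wtilde_def Wtilde_code_def snake_code)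

definition path_pair :: "nat \<Rightarrow> 'a::ab_group_add code \<Rightarrow> (int \<Rightarrow> 'a) \<times> (int \<Rightarrow> 'a)" where
  "path_pair k w = (stack_path (fst w), Wtilde_code k w)"

lemma path_pair_reversal:
  assumes "tip_pos w k = 0"
  shows "path_pair k (reversal k w) = prod.swap (path_pair k w)"
  using assms stack_reversal[of k k w]
  by (auto simp: path_pair_def Wtilde_code_def tip_pos_reversal_self fun_eq_iff stack_path_def)

abbreviation incr_space :: "'a pmf \<Rightarrow> 'a stream measure" where
  "incr_space p \<equiv> stream_space (measure_pmf p)"

abbreviation move_space :: "site pmf \<Rightarrow> site option measure" where
  "move_space \<theta> \<equiv> measure_pmf (move_pmf \<theta>)"

abbreviation moves_space :: "site pmf \<Rightarrow> (nat \<Rightarrow> site option) measure" where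
  "moves_space \<theta> \<equiv> PiM UNIV (\<lambda>_. move_space \<theta>)"

definition code_space :: "site pmf \<Rightarrow> site code measure" where
  "code_space \<theta> = incr_space \<theta> \<Otimes>\<^sub>M moves_space \<theta>"

lemma space_code_space [simp]: "space (code_space \<theta>) = UNIV"
  by (auto simp: code_space_def space_pair_measure space_stream_space space_PiM)

lemma prob_space_moves_space: "prob_space (moves_space \<theta>)"
  by (rule prob_space_PiM) (rule prob_space_measure_pmf)

lemma prob_space_incr_space: "prob_space (incr_space p)"
  by (rule prob_space.prob_space_stream_space[OF prob_space_measure_pmf])

lemma measurable_stack_move [measurable (raw)]:
  fixes g :: "'b \<Rightarrow> 'a::countable option"
  assumes "f \<in> M \<rightarrow>\<^sub>M incr_space p" and "g \<in> M \<rightarrow>\<^sub>M count_space UNIV"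
  shows "(\<lambda>x. stack_move (f x) (g x)) \<in> M \<rightarrow>\<^sub>M incr_space p"
proof (rule measurable_compose_countable[where f="\<lambda>m x. stack_move (f x) m", OF _ assms(2)])
  fix m show "(\<lambda>x. stack_move (f x) m) \<in> M \<rightarrow>\<^sub>M incr_space p"
    using assms(1) by (cases m) (simp_all add: stack_move_def)
qed

lemma measurable_tip_shift [measurable (raw)]:
  fixes g :: "'b \<Rightarrow> 'a::{countable, uminus} option"
  assumes "f \<in> M \<rightarrow>\<^sub>M incr_space p" and "g \<in> M \<rightarrow>\<^sub>M count_space UNIV"
  shows "(\<lambda>x. tip_shift (f x) (g x)) \<in> M \<rightarrow>\<^sub>M count_space UNIV"
proof (rule measurable_compose_countable[where f="\<lambda>m x. tip_shift (f x) m", OF _ assms(2)])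
  have "(\<lambda>x. shd (f x)) \<in> M \<rightarrow>\<^sub>M count_space UNIV"
    using measurable_compose[OF assms(1) measurable_shd] by simp
  then show "(\<lambda>x. tip_shift (f x) m) \<in> M \<rightarrow>\<^sub>M count_space UNIV" for m
    by (cases m) (auto simp: tip_shift_def intro: measurable_compose)
qed

lemma measurable_undo_move [measurable (raw)]:
  fixes g :: "'b \<Rightarrow> 'a::countable option"
  assumes "f \<in> M \<rightarrow>\<^sub>M incr_space p" and "g \<in> M \<rightarrow>\<^sub>M count_space UNIV"
  shows "(\<lambda>x. undo_move (g x) (f x)) \<in> M \<rightarrow>\<^sub>M count_space UNIV"
proof (rule measurable_compose_countable[where f="\<lambda>m x. undo_move m (f x)", OF _ assms(2)])
  have "(\<lambda>x. shd (f x)) \<in> M \<rightarrow>\<^sub>M count_space UNIV"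
    using measurable_compose[OF assms(1) measurable_shd] by simp
  then show "(\<lambda>x. undo_move m (f x)) \<in> M \<rightarrow>\<^sub>M count_space UNIV" for m
    by (cases m) (auto simp: undo_move_def intro: measurable_compose)
qed

lemma measurable_move_code [measurable]: "(\<lambda>w. snd w n) \<in> code_space \<theta> \<rightarrow>\<^sub>M count_space UNIV"
  unfolding code_space_def by measurable

lemma measurable_fst_code [measurable]: "fst \<in> code_space \<theta> \<rightarrow>\<^sub>M incr_space \<theta>"
  unfolding code_space_def by measurable

lemma measurable_incr_code [measurable]: "(\<lambda>w. fst w !! n) \<in> code_space \<theta> \<rightarrow>\<^sub>M count_space UNIV"
proof -
  have "(\<lambda>w. fst w !! n) \<in> code_space \<theta> \<rightarrow>\<^sub>M measure_pmf \<theta>"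
    by measurable
  then show ?thesis by simp
qed

lemma measurable_moves [measurable (raw)]:
  assumes "\<And>s. (\<lambda>x. f x s) \<in> M \<rightarrow>\<^sub>M count_space UNIV"
  shows "f \<in> M \<rightarrow>\<^sub>M moves_space \<theta>"
  using assms by (intro measurable_PiM_single') auto

lemma measurable_into_code [measurable (raw)]:
  assumes "f \<in> M \<rightarrow>\<^sub>M incr_space \<theta>" and "g \<in> M \<rightarrow>\<^sub>M moves_space \<theta>"
  shows "(\<lambda>x. (f x, g x)) \<in> M \<rightarrow>\<^sub>M code_space \<theta>"
  unfolding code_space_def using assms by measurable

lemma measurable_stack [measurable]: "(\<lambda>w. stack w n) \<in> code_space \<theta> \<rightarrow>\<^sub>M incr_space \<theta>"
  by (induction n) simp_all

lemma measurable_tip_pos [measurable]: "(\<lambda>w. tip_pos w n) \<in> code_space \<theta> \<rightarrow>\<^sub>M count_space UNIV"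
  by (induction n) simp_all

lemma measurable_reversal [measurable]: "reversal k \<in> code_space \<theta> \<rightarrow>\<^sub>M code_space \<theta>"
  unfolding reversal_def by measurable

lemma measurable_undo_at [measurable]: "undo_at k \<in> code_space \<theta> \<rightarrow>\<^sub>M code_space \<theta>"
  unfolding undo_at_def fun_upd_def by measurable

lemma measurable_reindex_moves [measurable]: "reindex_moves f \<in> code_space \<theta> \<rightarrow>\<^sub>M code_space \<theta>"
  unfolding reindex_moves_def o_def by measurable

lemma measurable_stack_path [measurable]: "stack_path \<in> incr_space \<theta> \<rightarrow>\<^sub>M path_space"
proof -
  have "(\<lambda>Y. \<Sum>i<n. Y !! i) \<in> incr_space \<theta> \<rightarrow>\<^sub>M count_space UNIV" for n
  proof (induction n)
    case (Suc n)
    have "(\<lambda>Y. Y !! n) \<in> incr_space \<theta> \<rightarrow>\<^sub>M measure_pmf \<theta>" by measurable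
    with Suc show ?case by simp
  qed simp
  then show ?thesis
    unfolding path_space_def stack_path_def
    by (intro measurable_PiM_single') (auto intro: measurable_compose)
qed

lemma measurable_path_pair [measurable]: "path_pair k \<in> code_space \<theta> \<rightarrow>\<^sub>M pair_path_space"
proof -
  have "(\<lambda>w. stack_path (stack w k) j) \<in> code_space \<theta> \<rightarrow>\<^sub>M count_space UNIV" for j
    using measurable_compose[OF measurable_stack measurable_stack_path]
    by (simp add: path_space_def)
  then have "Wtilde_code k \<in> code_space \<theta> \<rightarrow>\<^sub>M path_space"
    unfolding path_space_def Wtilde_code_def by (intro measurable_PiM_single') auto
  then show ?thesis
    unfolding path_pair_def pair_path_space_def by measurable
qed

lemma measurable_swap_pair_path [measurable]: "prod.swap \<in> pair_path_space \<rightarrow>\<^sub>M pair_path_space"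
proof -
  have "prod.swap = (\<lambda>(x :: int \<Rightarrow> site, y). (y, x))"
    by (simp add: fun_eq_iff)
  then show ?thesis
    unfolding pair_path_space_def using measurable_pair_swap' by metis
qed

section \<open>The reversal preserves the law of the code\<close>

lemma nn_integral_move_pmf:
  "(\<integral>\<^sup>+m. f m \<partial>move_space \<theta>) = ennreal (1/2) * f None + ennreal (1/2) * (\<integral>\<^sup>+y. f (Some y) \<partial>measure_pmf \<theta>)"
  by (simp add: move_pmf_def nn_integral_map_pmf mult.commute)

lemma emeasure_move_pmf:
  "emeasure (move_space \<theta>) B =
     ennreal (1/2) * indicator B None + ennreal (1/2) * emeasure (measure_pmf \<theta>) (Some -` B)"
proof -
  have "\<And>y. indicator B (Some y) = (indicator (Some -` B) y :: ennreal)"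
    by (simp add: indicator_def)
  then show ?thesis
    using nn_integral_move_pmf[where f="indicator B"] by (simp add: nn_integral_indicator)
qed

lemma nn_integral_incr_space_Stream:
  assumes [measurable]: "f \<in> borel_measurable (incr_space p)"
  shows "(\<integral>\<^sup>+Y. \<integral>\<^sup>+y. f (y ## Y) \<partial>measure_pmf p \<partial>incr_space p) = (\<integral>\<^sup>+Y. f Y \<partial>incr_space p)"
proof -
  interpret pair_sigma_finite "incr_space p" "measure_pmf p"
    by (intro pair_sigma_finite.intro prob_space_imp_sigma_finite prob_space_incr_space
        prob_space_measure_pmf)
  have "(\<integral>\<^sup>+Y. \<integral>\<^sup>+y. f (y ## Y) \<partial>measure_pmf p \<partial>incr_space p)
      = (\<integral>\<^sup>+y. \<integral>\<^sup>+Y. f (y ## Y) \<partial>incr_space p \<partial>measure_pmf p)"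
    by (subst Fubini'[symmetric]) auto
  also have "\<dots> = (\<integral>\<^sup>+Y. f Y \<partial>incr_space p)"
    by (rule prob_space.nn_integral_stream_space[OF prob_space_measure_pmf, symmetric]) simp
  finally show ?thesis .
qed

definition move_and_undo :: "'a stream \<times> 'a option \<Rightarrow> 'a stream \<times> 'a option" where
  "move_and_undo = (\<lambda>(Y, m). (stack_move Y m, undo_move m Y))"

lemma measurable_move_and_undo [measurable]:
  "move_and_undo \<in> incr_space \<theta> \<Otimes>\<^sub>M move_space \<theta> \<rightarrow>\<^sub>M incr_space \<theta> \<Otimes>\<^sub>M move_space \<theta>"
  unfolding move_and_undo_def by measurable

lemma distr_move_and_undo:
  "distr (incr_space \<theta> \<Otimes>\<^sub>M move_space \<theta>) (incr_space \<theta> \<Otimes>\<^sub>M move_space \<theta>) move_and_undo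
     = incr_space \<theta> \<Otimes>\<^sub>M move_space \<theta>"
proof (rule pair_measure_eqI[symmetric])
  interpret X: prob_space "incr_space \<theta>" by (rule prob_space_incr_space)
  interpret N: prob_space "move_space \<theta>" by (rule prob_space_measure_pmf)
  show "sigma_finite_measure (incr_space \<theta>)" "sigma_finite_measure (move_space \<theta>)"
    by unfold_locales
  let ?P = "incr_space \<theta> \<Otimes>\<^sub>M move_space \<theta>"
  show "sets ?P = sets (distr ?P ?P move_and_undo)"
    by simp
  fix A B assume A[measurable]: "A \<in> sets (incr_space \<theta>)" and B[measurable]: "B \<in> sets (move_space \<theta>)"
  have "emeasure (distr ?P ?P move_and_undo) (A \<times> B) = (\<integral>\<^sup>+z. indicator (A \<times> B) (move_and_undo z) \<partial>?P)"
    by (subst emeasure_distr) (auto simp: nn_integral_indicator[symmetric] simp del: nn_integral_indicator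
        intro!: nn_integral_cong split: split_indicator)
  also have "\<dots> = (\<integral>\<^sup>+Y. \<integral>\<^sup>+m. indicator (A \<times> B) (move_and_undo (Y, m)) \<partial>move_space \<theta> \<partial>incr_space \<theta>)"
    by (subst measure_pmf.nn_integral_fst[symmetric]) auto
  also have "\<dots> = (\<integral>\<^sup>+Y. ennreal (1/2) * (indicator A (stl Y) * indicator B (Some (shd Y)))
        + ennreal (1/2) * (indicator B None * (\<integral>\<^sup>+y. indicator A (y ## Y) \<partial>measure_pmf \<theta>)) \<partial>incr_space \<theta>)"
    by (subst nn_integral_move_pmf) (simp add: move_and_undo_def stack_move_def undo_move_def
        indicator_times nn_integral_cmult mult.commute)
  also have "\<dots> = ennreal (1/2) * (\<integral>\<^sup>+Y. indicator A (stl Y) * indicator B (Some (shd Y)) \<partial>incr_space \<theta>)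
        + ennreal (1/2) * (indicator B None * (\<integral>\<^sup>+Y. \<integral>\<^sup>+y. indicator A (y ## Y) \<partial>measure_pmf \<theta> \<partial>incr_space \<theta>))"
    by (subst nn_integral_add) (auto simp: nn_integral_cmult)
  also have "(\<integral>\<^sup>+Y. indicator A (stl Y) * indicator B (Some (shd Y)) \<partial>incr_space \<theta>)
       = (\<integral>\<^sup>+x. \<integral>\<^sup>+Y. indicator A Y * indicator (Some -` B) x \<partial>incr_space \<theta> \<partial>measure_pmf \<theta>)"
    by (subst prob_space.nn_integral_stream_space[OF prob_space_measure_pmf])
       (auto simp: indicator_def intro!: nn_integral_cong)
  also have "\<dots> = emeasure (incr_space \<theta>) A * emeasure (measure_pmf \<theta>) (Some -` B)"
    by (simp add: nn_integral_multc nn_integral_cmult)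
  also have "(\<integral>\<^sup>+Y. \<integral>\<^sup>+y. indicator A (y ## Y) \<partial>measure_pmf \<theta> \<partial>incr_space \<theta>) = emeasure (incr_space \<theta>) A"
    by (simp add: nn_integral_incr_space_Stream)
  finally show "emeasure (incr_space \<theta>) A * emeasure (move_space \<theta>) B = emeasure (distr ?P ?P move_and_undo) (A \<times> B)"
    by (simp add: emeasure_move_pmf algebra_simps)
qed

abbreviation other_moves_space :: "nat \<Rightarrow> site pmf \<Rightarrow> (nat \<Rightarrow> site option) measure" where
  "other_moves_space k \<theta> \<equiv> PiM (UNIV - {k}) (\<lambda>_. move_space \<theta>)"

lemma measurable_fun_upd_moves [measurable (raw)]:
  assumes "f \<in> M \<rightarrow>\<^sub>M other_moves_space k \<theta>" and "g \<in> M \<rightarrow>\<^sub>M move_space \<theta>"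
  shows "(\<lambda>x. (f x)(k := g x)) \<in> M \<rightarrow>\<^sub>M moves_space \<theta>"
proof (rule measurable_moves)
  fix s show "(\<lambda>x. ((f x)(k := g x)) s) \<in> M \<rightarrow>\<^sub>M count_space UNIV"
  proof (cases "s = k")
    case False
    then have "(\<lambda>x. f x s) \<in> M \<rightarrow>\<^sub>M move_space \<theta>"
      by (intro measurable_compose[OF assms(1)] measurable_component_singleton) auto
    with False show ?thesis by simp
  qed (use assms(2) in simp)
qed

lemma distr_fun_upd_moves:
  "distr (move_space \<theta> \<Otimes>\<^sub>M other_moves_space k \<theta>) (moves_space \<theta>) (\<lambda>w. (snd w)(k := fst w))
     = moves_space \<theta>"
  using distr_pair_PiM_eq_PiM[of "UNIV - {k}" "\<lambda>_. move_space \<theta>" k]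
  by (simp add: prob_space_measure_pmf insert_absorb split_beta')

definition insert_move :: "nat \<Rightarrow> ('a stream \<times> 'a option) \<times> (nat \<Rightarrow> 'a option) \<Rightarrow> 'a code" where
  "insert_move k = (\<lambda>((Y, m), r). (Y, r(k := m)))"

lemma measurable_insert_move [measurable]:
  "insert_move k \<in> (incr_space \<theta> \<Otimes>\<^sub>M move_space \<theta>) \<Otimes>\<^sub>M other_moves_space k \<theta> \<rightarrow>\<^sub>M code_space \<theta>"
proof -
  have eq: "insert_move k = (\<lambda>x. (fst (fst x), (snd x)(k := snd (fst x))))"
    by (auto simp: insert_move_def fun_eq_iff)
  show ?thesis unfolding eq by measurable
qed

lemma distr_insert_move:
  "distr ((incr_space \<theta> \<Otimes>\<^sub>M move_space \<theta>) \<Otimes>\<^sub>M other_moves_space k \<theta>) (code_space \<theta>) (insert_move k)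
     = code_space \<theta>"
  unfolding code_space_def
proof (rule pair_measure_eqI[symmetric])
  let ?S = "(incr_space \<theta> \<Otimes>\<^sub>M move_space \<theta>) \<Otimes>\<^sub>M other_moves_space k \<theta>"
  let ?D = "distr ?S (incr_space \<theta> \<Otimes>\<^sub>M moves_space \<theta>) (insert_move k)"
  interpret X: prob_space "incr_space \<theta>" by (rule prob_space_incr_space)
  interpret M: prob_space "moves_space \<theta>" by (rule prob_space_moves_space)
  interpret R: prob_space "other_moves_space k \<theta>" by (rule prob_space_PiM) (rule prob_space_measure_pmf)
  show "sigma_finite_measure (incr_space \<theta>)" "sigma_finite_measure (moves_space \<theta>)"
    by unfold_locales
  show "sets (incr_space \<theta> \<Otimes>\<^sub>M moves_space \<theta>) = sets ?D"
    by simp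
  fix A B assume A[measurable]: "A \<in> sets (incr_space \<theta>)" and B[measurable]: "B \<in> sets (moves_space \<theta>)"
  have [measurable]: "insert_move k \<in> ?S \<rightarrow>\<^sub>M incr_space \<theta> \<Otimes>\<^sub>M moves_space \<theta>"
    using measurable_insert_move by (simp add: code_space_def)
  have [measurable]: "(\<lambda>m. \<integral>\<^sup>+r. indicator B (r(k := m)) \<partial>other_moves_space k \<theta>) \<in> borel_measurable (move_space \<theta>)"
    by simp
  have "emeasure ?D (A \<times> B) = (\<integral>\<^sup>+w. indicator (A \<times> B) (insert_move k w) \<partial>?S)"
    by (subst emeasure_distr) (auto simp: nn_integral_indicator[symmetric] simp del: nn_integral_indicator
        intro!: nn_integral_cong split: split_indicator)
  also have "\<dots> = (\<integral>\<^sup>+z. indicator A (fst z) * (\<integral>\<^sup>+r. indicator B (r(k := snd z)) \<partial>other_moves_space k \<theta>)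
      \<partial>(incr_space \<theta> \<Otimes>\<^sub>M move_space \<theta>))"
    by (subst R.nn_integral_fst[symmetric])
       (auto simp: insert_move_def indicator_times split_beta' nn_integral_cmult)
  also have "\<dots> = (\<integral>\<^sup>+Y. indicator A Y * (\<integral>\<^sup>+m. \<integral>\<^sup>+r. indicator B (r(k := m)) \<partial>other_moves_space k \<theta>
      \<partial>move_space \<theta>) \<partial>incr_space \<theta>)"
    by (subst measure_pmf.nn_integral_fst[symmetric]) (auto simp: nn_integral_cmult)
  also have "(\<integral>\<^sup>+m. \<integral>\<^sup>+r. indicator B (r(k := m)) \<partial>other_moves_space k \<theta> \<partial>move_space \<theta>)
      = (\<integral>\<^sup>+w. indicator B ((snd w)(k := fst w)) \<partial>(move_space \<theta> \<Otimes>\<^sub>M other_moves_space k \<theta>))"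
    by (subst R.nn_integral_fst[symmetric]) auto
  also have "\<dots> = (\<integral>\<^sup>+r. indicator B r \<partial>distr (move_space \<theta> \<Otimes>\<^sub>M other_moves_space k \<theta>) (moves_space \<theta>)
           (\<lambda>w. (snd w)(k := fst w)))"
    by (subst nn_integral_distr) auto
  also have "\<dots> = emeasure (moves_space \<theta>) B"
    by (simp add: distr_fun_upd_moves)
  finally show "emeasure (incr_space \<theta>) A * emeasure (moves_space \<theta>) B = emeasure ?D (A \<times> B)"
    by (simp add: nn_integral_multc)
qed

lemma undo_at_insert_move:
  "undo_at k \<circ> insert_move k = insert_move k \<circ> (\<lambda>(z, r). (move_and_undo z, r))"
  by (auto simp: undo_at_def insert_move_def move_and_undo_def fun_eq_iff)

lemma distr_undo_at: "distr (code_space \<theta>) (code_space \<theta>) (undo_at k) = code_space \<theta>"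
proof -
  let ?S = "(incr_space \<theta> \<Otimes>\<^sub>M move_space \<theta>) \<Otimes>\<^sub>M other_moves_space k \<theta>"
  interpret R: prob_space "other_moves_space k \<theta>" by (rule prob_space_PiM) (rule prob_space_measure_pmf)
  have "distr (incr_space \<theta> \<Otimes>\<^sub>M move_space \<theta>) (incr_space \<theta> \<Otimes>\<^sub>M move_space \<theta>) move_and_undo
      \<Otimes>\<^sub>M distr (other_moves_space k \<theta>) (other_moves_space k \<theta>) (\<lambda>r. r)
      = distr ?S ?S (\<lambda>(z, r). (move_and_undo z, r))"
    by (rule pair_measure_distr) (simp_all add: distr_id R.sigma_finite_measure_axioms)
  then have S: "distr ?S ?S (\<lambda>(z, r). (move_and_undo z, r)) = ?S"
    by (simp add: distr_move_and_undo distr_id)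
  have "distr (code_space \<theta>) (code_space \<theta>) (undo_at k)
      = distr ?S (code_space \<theta>) (undo_at k \<circ> insert_move k)"
    by (subst (1) distr_insert_move[symmetric]) (simp add: distr_distr)
  also have "\<dots> = distr (distr ?S ?S (\<lambda>(z, r). (move_and_undo z, r))) (code_space \<theta>) (insert_move k)"
    by (simp add: undo_at_insert_move distr_distr)
  finally show ?thesis by (simp add: S distr_insert_move)
qed

lemma distr_reindex_moves:
  assumes "inj f"
  shows "distr (code_space \<theta>) (code_space \<theta>) (reindex_moves f) = code_space \<theta>"
proof -
  interpret M: prob_space "moves_space \<theta>" by (rule prob_space_moves_space)
  have moves: "distr (moves_space \<theta>) (moves_space \<theta>) (\<lambda>N. N \<circ> f) = moves_space \<theta>"
    using distr_PiM_reindex[of UNIV "\<lambda>_. move_space \<theta>" f UNIV] assms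
    by (simp add: prob_space_measure_pmf restrict_def o_def)
  have eq: "reindex_moves f = (\<lambda>(Y, N). (Y, N \<circ> f))"
    by (auto simp: reindex_moves_def fun_eq_iff)
  have "distr (code_space \<theta>) (code_space \<theta>) (\<lambda>(Y, N). (Y, N \<circ> f))
      = distr (incr_space \<theta>) (incr_space \<theta>) (\<lambda>Y. Y) \<Otimes>\<^sub>M distr (moves_space \<theta>) (moves_space \<theta>) (\<lambda>N. N \<circ> f)"
    unfolding code_space_def
  proof (rule pair_measure_distr[symmetric])
    show "(\<lambda>N. N \<circ> f) \<in> moves_space \<theta> \<rightarrow>\<^sub>M moves_space \<theta>"
      by (simp add: o_def)
  qed (simp_all add: moves M.sigma_finite_measure_axioms)
  also have "\<dots> = code_space \<theta>"
    by (simp add: moves distr_id code_space_def)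
  finally show ?thesis unfolding eq .
qed

lemma distr_reversal: "distr (code_space \<theta>) (code_space \<theta>) (reversal k) = code_space \<theta>"
proof (induction k)
  case 0
  have "reversal 0 = (\<lambda>w :: site code. w)" by (auto simp: reversal_def fun_eq_iff)
  then show ?case by (simp add: distr_id)
next
  case (Suc k)
  have "distr (code_space \<theta>) (code_space \<theta>) (reversal (Suc k)) = distr (distr (distr (code_space \<theta>)
      (code_space \<theta>) (reversal k)) (code_space \<theta>) (undo_at k)) (code_space \<theta>) (reindex_moves (cycle_front k))"
    by (simp add: reversal_Suc distr_distr comp_assoc)
  then show ?case
    by (simp add: Suc.IH distr_undo_at distr_reindex_moves inj_cycle_front)
qed

definition code_to_stream :: "'a code \<Rightarrow> ('a \<times> 'a option) stream" where
  "code_to_stream w = to_stream (\<lambda>n. (fst w !! n, snd w n))"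

lemma code_of_code_to_stream [simp]: "code_of (code_to_stream w) = w"
  by (simp add: code_of_def code_to_stream_def to_stream_def smap_alt prod_eq_iff)

lemma measurable_code_of [measurable]: "code_of \<in> snake_space \<theta> \<rightarrow>\<^sub>M code_space \<theta>"
proof -
  have "(\<lambda>\<omega>. \<omega> !! n) \<in> snake_space \<theta> \<rightarrow>\<^sub>M count_space UNIV" for n
    using measurable_snth[of n "measure_pmf (pair_pmf \<theta> (move_pmf \<theta>))"] by (simp add: snake_space_def)
  then have "(\<lambda>\<omega>. snd (\<omega> !! n)) \<in> snake_space \<theta> \<rightarrow>\<^sub>M count_space UNIV" for n
    by (rule measurable_compose) simp
  moreover have "smap fst \<in> snake_space \<theta> \<rightarrow>\<^sub>M incr_space \<theta>"
    unfolding snake_space_def by (rule measurable_smap) simp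
  ultimately show ?thesis
    unfolding code_of_def by (intro measurable_into_code measurable_moves)
qed

lemma measurable_code_to_stream [measurable]: "code_to_stream \<in> code_space \<theta> \<rightarrow>\<^sub>M snake_space \<theta>"
proof -
  have "(\<lambda>w n. (fst w !! n, snd w n)) \<in> code_space \<theta> \<rightarrow>\<^sub>M PiM UNIV (\<lambda>_. measure_pmf (pair_pmf \<theta> (move_pmf \<theta>)))"
    by (rule measurable_PiM_single') (auto intro!: measurable_Pair_count_space)
  then show ?thesis
    unfolding code_to_stream_def snake_space_def by (rule measurable_compose[OF _ measurable_to_stream])
qed

lemma distr_code_to_stream: "distr (code_space \<theta>) (snake_space \<theta>) code_to_stream = snake_space \<theta>"
proof -
  let ?I = "PiM UNIV (\<lambda>_::nat. measure_pmf \<theta>)"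
  let ?P = "PiM UNIV (\<lambda>_::nat. measure_pmf (pair_pmf \<theta> (move_pmf \<theta>)))"
  let ?stream = "\<lambda>(X, N). (to_stream X, N)" and ?zip = "\<lambda>w n. (fst w n, snd w n)"
  interpret M: prob_space "moves_space \<theta>" by (rule prob_space_moves_space)
  have [measurable]: "?stream \<in> ?I \<Otimes>\<^sub>M moves_space \<theta> \<rightarrow>\<^sub>M code_space \<theta>"
    unfolding code_space_def by measurable
  have [measurable]: "?zip \<in> ?I \<Otimes>\<^sub>M moves_space \<theta> \<rightarrow>\<^sub>M ?P"
    by (rule measurable_PiM_single') (auto intro!: measurable_Pair_count_space)
  have "distr ?I (incr_space \<theta>) to_stream \<Otimes>\<^sub>M distr (moves_space \<theta>) (moves_space \<theta>) (\<lambda>N. N)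
      = distr (?I \<Otimes>\<^sub>M moves_space \<theta>) (incr_space \<theta> \<Otimes>\<^sub>M moves_space \<theta>) ?stream"
    by (rule pair_measure_distr) (simp_all add: distr_id M.sigma_finite_measure_axioms)
  then have code: "code_space \<theta> = distr (?I \<Otimes>\<^sub>M moves_space \<theta>) (code_space \<theta>) ?stream"
    by (simp add: code_space_def distr_id stream_space_eq_distr[symmetric])
  have "distr (code_space \<theta>) (snake_space \<theta>) code_to_stream
      = distr (?I \<Otimes>\<^sub>M moves_space \<theta>) (snake_space \<theta>) (code_to_stream \<circ> ?stream)"
    by (subst (1) code) (rule distr_distr; measurable)
  also have "code_to_stream \<circ> ?stream = to_stream \<circ> ?zip"
    by (auto simp: code_to_stream_def fun_eq_iff to_stream_def)
  also have "distr (?I \<Otimes>\<^sub>M moves_space \<theta>) (snake_space \<theta>) (to_stream \<circ> ?zip)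
      = distr (distr (?I \<Otimes>\<^sub>M moves_space \<theta>) ?P ?zip) (snake_space \<theta>) to_stream"
    by (rule distr_distr[symmetric]) (auto simp: snake_space_def)
  also have "\<dots> = snake_space \<theta>"
    by (simp add: distr_PiM_pair_pmf snake_space_def stream_space_eq_distr[symmetric])
  finally show ?thesis .
qed

lemma distr_uniform_snake_space:
  assumes [measurable]: "Measurable.pred (code_space \<theta>) P" "h \<in> code_space \<theta> \<rightarrow>\<^sub>M N"
  shows "distr (uniform_measure (snake_space \<theta>) {\<omega> \<in> space (snake_space \<theta>). P (code_of \<omega>)}) N (h \<circ> code_of)
    = distr (uniform_measure (code_space \<theta>) {w. P w}) N h"
proof -
  have [measurable]: "{w. P w} \<in> sets (code_space \<theta>)"
    using assms(1) by (simp add: pred_def)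
  have "code_to_stream w \<in> space (snake_space \<theta>)" for w
    using measurable_space[OF measurable_code_to_stream] by simp
  then have "uniform_measure (snake_space \<theta>) {\<omega> \<in> space (snake_space \<theta>). P (code_of \<omega>)}
      = distr (uniform_measure (code_space \<theta>) {w. P w}) (snake_space \<theta>) code_to_stream"
    using uniform_measure_distr[OF measurable_code_to_stream, of "{\<omega> \<in> space (snake_space \<theta>). P (code_of \<omega>)}" \<theta>]
    by (simp add: distr_code_to_stream)
  then show ?thesis
    by (simp add: distr_distr comp_def)
qed

theorem lemma3p9:
  fixes \<theta> :: "site pmf" and \<sigma> :: real and k :: nat
  assumes "symmetric_law \<theta>"
    and "small_exp_moments \<theta>"
    and "not_on_strict_subgroup \<theta>"
    and "covariance_scalar \<theta> \<sigma>"
    and "k \<ge> 1"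
    and "measure (snake_space \<theta>) {\<omega> \<in> space (snake_space \<theta>). tip (snake \<omega> k) = 0} > 0"
  shows "distr (uniform_measure (snake_space \<theta>)
                  {\<omega> \<in> space (snake_space \<theta>). tip (snake \<omega> k) = 0})
               pair_path_space (\<lambda>\<omega>. (W0 \<omega>, Wtilde \<omega> k))
       = distr (uniform_measure (snake_space \<theta>)
                  {\<omega> \<in> space (snake_space \<theta>). tip (snake \<omega> k) = 0})
               pair_path_space (\<lambda>\<omega>. (Wtilde \<omega> k, W0 \<omega>))"
proof -
  let ?U = "uniform_measure (code_space \<theta>) {w. tip_pos w k = 0}"
  have tip_zero: "Measurable.pred (code_space \<theta>) (\<lambda>w. tip_pos w k = 0)"
    by measurable
  then have [measurable]: "{w. tip_pos w k = 0} \<in> sets (code_space \<theta>)"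
    by (simp add: pred_def)
  have "(\<lambda>\<omega>. (W0 \<omega>, Wtilde \<omega> k)) = path_pair k \<circ> code_of"
    and "(\<lambda>\<omega>. (Wtilde \<omega> k, W0 \<omega>)) = (prod.swap \<circ> path_pair k) \<circ> code_of"
    and "{\<omega> \<in> space (snake_space \<theta>). tip (snake \<omega> k) = 0}
      = {\<omega> \<in> space (snake_space \<theta>). tip_pos (code_of \<omega>) k = 0}"
    by (auto simp: path_pair_def W0_code Wtilde_code tip_snake)
  moreover have "distr ?U pair_path_space (path_pair k) = distr ?U pair_path_space (prod.swap \<circ> path_pair k)"
    by (rule distr_uniform_measure_transform[where T="reversal k"])
       (auto simp: distr_reversal tip_pos_reversal_self path_pair_reversal)
  ultimately show ?thesis
    by (simp only: distr_uniform_snake_space[OF tip_zero] measurable_path_pair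
        measurable_comp[OF measurable_path_pair measurable_swap_pair_path])
qed

end
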